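(* Let $\lambda$ be a partition with $\ell\geq 4$ positive parts, and let $n\geq\ell$. If $\lambda=(3^m,2,1^{\ell-m-1})$ for some $m\in\{1,\ldots,\ell-2\}$, then the poset $\mathcal B_\lambda^n$ is not a lattice.
   Context: Superscripts denote repeated parts, e.g. $(3^2,2,1)=(3,3,2,1)$. For $N\geq 1$ and a partition $\nu$ with at most $N$ positive parts, $\mathcal B_\nu^N$ is the set of semistandard Young tableaux of shape $\nu$ (rows weakly increasing, columns strictly increasing) with entries in $\{1,\ldots,N+1\}$, partially ordered by the reflexive transitive closure of $T<F_i(T)$ for $i\in\{1,\ldots,N\}$ with $F_i(T)\neq 0$. Here $F_i$ is the type A crystal lowering operator: in the reading word of $T$ (rows read from bottom to top, each row left to right) keep only letters $i$ and $i+1$, replace each $i$ by ")" and each $i+1$ by "(", and match parentheses in the usual way; if there is no unmatched ")", $F_i(T)=0$; otherwise $F_i(T)$ is obtained by changing the entry $i$ corresponding to the rightmost unmatched ")" into $i+1$. *)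

theory Defs
  imports Main
begin

text \<open>Partitions are lists of weakly decreasing positive naturals.
  A tableau of shape nu is a list of rows (row 0 is the top row),
  row r has length nu ! r; entries are naturals.\<close>

definition is_partition :: "nat list \<Rightarrow> bool" where
  "is_partition nu \<longleftrightarrow> (\<forall>k<length nu. 0 < nu ! k) \<and> sorted (rev nu)"

definition ssyt :: "nat \<Rightarrow> nat list \<Rightarrow> nat list list \<Rightarrow> bool" where
  "ssyt N nu T \<longleftrightarrow>
     length T = length nu \<and>
     (\<forall>r<length nu. length (T ! r) = nu ! r) \<and>
     (\<forall>r<length nu. \<forall>c<nu ! r. 1 \<le> T ! r ! c \<and> T ! r ! c \<le> N + 1) \<and>
     (\<forall>r<length nu. \<forall>c. Suc c < nu ! r \<longrightarrow> T ! r ! c \<le> T ! r ! Suc c) \<and>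
     (\<forall>r c. Suc r < length nu \<and> c < nu ! Suc r \<longrightarrow> T ! r ! c < T ! Suc r ! c)"

definition reading_word :: "nat list list \<Rightarrow> nat list" where
  "reading_word T = concat (rev T)"

fun split_lengths :: "nat list \<Rightarrow> 'a list \<Rightarrow> 'a list list" where
  "split_lengths [] w = []"
| "split_lengths (l # ls) w = take l w # split_lengths ls (drop l w)"

definition unread :: "nat list \<Rightarrow> nat list \<Rightarrow> nat list list" where
  "unread nu w = rev (split_lengths (rev nu) w)"

text \<open>Positions (in the word, 0-based, counted from offset p) of the letters i that
  are unmatched ")" when i is read as ")" and i+1 as "(" ; k is the number of
  currently unmatched "(".\<close>
fun unmatched_pos :: "nat \<Rightarrow> nat \<Rightarrow> nat \<Rightarrow> nat list \<Rightarrow> nat list" where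
  "unmatched_pos i k p [] = []"
| "unmatched_pos i k p (x # xs) =
     (if x = i then
        (if 0 < k then unmatched_pos i (k - 1) (Suc p) xs
         else p # unmatched_pos i k (Suc p) xs)
      else if x = Suc i then unmatched_pos i (Suc k) (Suc p) xs
      else unmatched_pos i k (Suc p) xs)"

text \<open>Crystal lowering operator F_i on tableaux; None plays the role of 0.\<close>
definition crystal_F :: "nat \<Rightarrow> nat list list \<Rightarrow> nat list list option" where
  "crystal_F i T =
     (let w = reading_word T; ps = unmatched_pos i 0 0 w in
      if ps = [] then None
      else Some (unread (map length T) (w[last ps := Suc i])))"

definition crystal_B :: "nat list \<Rightarrow> nat \<Rightarrow> nat list list set" where
  "crystal_B nu N = {T. ssyt N nu T}"

definition crystal_step :: "nat list \<Rightarrow> nat \<Rightarrow> (nat list list \<times> nat list list) set" where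
  "crystal_step nu N =
     {(T, T'). T \<in> crystal_B nu N \<and> (\<exists>i\<in>{1..N}. crystal_F i T = Some T')}"

definition crystal_le :: "nat list \<Rightarrow> nat \<Rightarrow> nat list list \<Rightarrow> nat list list \<Rightarrow> bool" where
  "crystal_le nu N T T' \<longleftrightarrow> (T, T') \<in> (crystal_step nu N)\<^sup>*"

definition is_lattice_on :: "'a set \<Rightarrow> ('a \<Rightarrow> 'a \<Rightarrow> bool) \<Rightarrow> bool" where
  "is_lattice_on S le \<longleftrightarrow>
     (\<forall>x\<in>S. \<forall>y\<in>S.
        (\<exists>z\<in>S. le x z \<and> le y z \<and> (\<forall>u\<in>S. le x u \<and> le y u \<longrightarrow> le z u)) \<and>
        (\<exists>z\<in>S. le z x \<and> le z y \<and> (\<forall>u\<in>S. le u x \<and> le u y \<longrightarrow> le u z)))"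

end

theory Submission
  imports Defs
begin

text \<open>The poset is graded by the sum of the entries, which every \<open>F\<^sub>i\<close> raises by exactly one.
  For each shape we exhibit tableaux \<open>x\<close>, \<open>y\<close> with two common upper bounds \<open>z\<close>, \<open>z'\<close> such
  that \<open>z\<close> covers \<open>y\<close>, \<open>x \<not>\<le> y\<close> and \<open>z \<not>\<le> z'\<close>. A join of \<open>x\<close> and \<open>y\<close> would lie
  between \<open>y\<close> and \<open>z\<close>, hence be \<open>y\<close> or \<open>z\<close>, and either choice contradicts one of the two
  non-relations. The tableaux involved agree outside a window of at most four rows, and the
  letters outside the window avoid \<open>i\<close> and \<open>i + 1\<close> for the operators used, so every
  \<open>F\<^sub>i\<close> is computed on a word of length at most nine.\<close>

section \<open>Crystal operators on words\<close>

definition word_F :: "nat \<Rightarrow> nat list \<Rightarrow> nat list option" where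
  "word_F i w =
     (let ps = unmatched_pos i 0 0 w in
      if ps = [] then None else Some (w[last ps := Suc i]))"

lemma crystal_F_eq_word_F:
  "crystal_F i T = map_option (unread (map length T)) (word_F i (reading_word T))"
  by (simp add: crystal_F_def word_F_def Let_def)

lemma unmatched_pos_avoiding:
  "i \<notin> set w \<Longrightarrow> Suc i \<notin> set w \<Longrightarrow> unmatched_pos i k p w = []"
  by (induction w arbitrary: p) auto

lemma unmatched_pos_append_avoiding_left:
  "i \<notin> set u \<Longrightarrow> Suc i \<notin> set u \<Longrightarrow>
   unmatched_pos i k p (u @ w) = unmatched_pos i k (p + length u) w"
  by (induction u arbitrary: p) auto

lemma unmatched_pos_append_avoiding_right:
  "i \<notin> set v \<Longrightarrow> Suc i \<notin> set v \<Longrightarrow>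
   unmatched_pos i k p (w @ v) = unmatched_pos i k p w"
  by (induction i k p w rule: unmatched_pos.induct) (auto simp: unmatched_pos_avoiding)

lemma unmatched_pos_shift:
  "unmatched_pos i k (p + q) w = map (\<lambda>x. x + q) (unmatched_pos i k p w)"
  by (induction i k p w arbitrary: q rule: unmatched_pos.induct) auto

lemma unmatched_pos_nth:
  "q \<in> set (unmatched_pos i k p w) \<Longrightarrow> p \<le> q \<and> q < p + length w \<and> w ! (q - p) = i"
  by (induction i k p w rule: unmatched_pos.induct)
    (auto split: if_splits simp: nth_Cons' Suc_diff_le)

lemma word_F_SomeD:
  assumes "word_F i w = Some w'"
  shows "\<exists>p < length w. w ! p = i \<and> w' = w[p := Suc i]"
proof -
  let ?ps = "unmatched_pos i 0 0 w"
  have "?ps \<noteq> []" and w': "w' = w[last ?ps := Suc i]"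
    using assms by (auto simp: word_F_def Let_def split: if_splits)
  then have "last ?ps \<in> set ?ps" by simp
  with w' show ?thesis using unmatched_pos_nth[of "last ?ps" i 0 0 w] by auto
qed

lemma word_F_append_avoiding:
  assumes "i \<notin> set u" "Suc i \<notin> set u" "i \<notin> set v" "Suc i \<notin> set v"
  shows "word_F i (u @ w @ v) = map_option (\<lambda>w'. u @ w' @ v) (word_F i w)"
proof -
  have ps: "unmatched_pos i 0 0 (u @ w @ v) = map (\<lambda>x. x + length u) (unmatched_pos i 0 0 w)"
    using assms unmatched_pos_shift[of i 0 0 "length u" w]
    by (simp add: unmatched_pos_append_avoiding_left unmatched_pos_append_avoiding_right)
  show ?thesis
  proof (cases "unmatched_pos i 0 0 w = []")
    case False
    then have "last (unmatched_pos i 0 0 w) < length w"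
      using unmatched_pos_nth[of "last (unmatched_pos i 0 0 w)" i 0 0 w] by simp
    with False show ?thesis
      by (simp add: word_F_def Let_def ps last_map list_update_append)
  qed (simp add: word_F_def ps)
qed

lemma split_lengths_map_length: "split_lengths (map length Ts) (concat Ts) = Ts"
  by (induction Ts) auto

lemma concat_split_lengths: "concat (split_lengths ls w) = take (sum_list ls) w"
  by (induction ls arbitrary: w) (auto simp: take_add)

lemma unread_reading_word: "unread (map length T) (reading_word T) = T"
  by (simp add: unread_def reading_word_def rev_map split_lengths_map_length)

lemma reading_word_unread:
  assumes "length w = length (reading_word T)"
  shows "reading_word (unread (map length T) w) = w"
proof -
  have "sum_list (rev (map length T)) = length w"
    using assms by (simp add: reading_word_def length_concat rev_map[symmetric])
  then show ?thesis
    by (simp add: unread_def reading_word_def concat_split_lengths)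
qed

lemma crystal_F_SomeD_word_F:
  assumes "crystal_F i T = Some T'"
  shows "word_F i (reading_word T) = Some (reading_word T')"
proof -
  obtain w' where w': "word_F i (reading_word T) = Some w'"
    and T': "T' = unread (map length T) w'"
    using assms by (auto simp: crystal_F_eq_word_F)
  have "length w' = length (reading_word T)"
    using word_F_SomeD[OF w'] by auto
  then have "reading_word T' = w'"
    unfolding T' by (rule reading_word_unread)
  with w' show ?thesis by simp
qed

lemma crystal_F_SomeD:
  "crystal_F i T = Some T' \<Longrightarrow> \<exists>p < length (reading_word T). reading_word T ! p = i \<and>
     reading_word T' = (reading_word T)[p := Suc i]"
  by (rule word_F_SomeD[OF crystal_F_SomeD_word_F])

lemma crystal_F_eq_Some_iff:
  assumes "map length T' = map length T"
  shows "crystal_F i T = Some T' \<longleftrightarrow> word_F i (reading_word T) = Some (reading_word T')"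
  using crystal_F_SomeD_word_F[of i T T'] unread_reading_word[of T'] assms
  by (auto simp: crystal_F_eq_word_F)

lemma crystal_F_eq_Some_iff_middle:
  assumes "reading_word T = u @ w @ v" "reading_word T' = u @ w' @ v"
    and "map length T' = map length T"
    and "i \<notin> set u" "Suc i \<notin> set u" "i \<notin> set v" "Suc i \<notin> set v"
  shows "crystal_F i T = Some T' \<longleftrightarrow> word_F i w = Some w'"
  using assms by (auto simp: crystal_F_eq_Some_iff word_F_append_avoiding)

section \<open>Grading by the entry sum\<close>

definition tableau_rank :: "nat list list \<Rightarrow> nat" where
  "tableau_rank T = sum_list (reading_word T)"

lemma tableau_rank_crystal_F:
  "crystal_F i T = Some T' \<Longrightarrow> tableau_rank T' = Suc (tableau_rank T)"
  by (auto simp: tableau_rank_def sum_list_update dest!: crystal_F_SomeD)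

lemma crystal_le_step:
  "T \<in> crystal_B nu N \<Longrightarrow> i \<in> {1..N} \<Longrightarrow> crystal_F i T = Some T' \<Longrightarrow> crystal_le nu N T T'"
  unfolding crystal_le_def crystal_step_def by blast

lemma crystal_le_trans [trans]:
  "crystal_le nu N T U \<Longrightarrow> crystal_le nu N U V \<Longrightarrow> crystal_le nu N T V"
  unfolding crystal_le_def by (rule rtrancl_trans)

lemma crystal_le_rank_mono:
  "crystal_le nu N T T' \<Longrightarrow> tableau_rank T \<le> tableau_rank T'"
  unfolding crystal_le_def
  by (induction rule: rtrancl_induct) (auto simp: crystal_step_def dest!: tableau_rank_crystal_F)

lemma crystal_le_rank_antisym:
  assumes "crystal_le nu N T T'" "tableau_rank T' \<le> tableau_rank T"
  shows "T = T'"
  using assms(1) unfolding crystal_le_def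
proof (cases rule: converse_rtranclE)
  case (step U)
  then have "tableau_rank U \<le> tableau_rank T'"
    using crystal_le_rank_mono unfolding crystal_le_def by blast
  moreover have "tableau_rank U = Suc (tableau_rank T)"
    using step(1) tableau_rank_crystal_F unfolding crystal_step_def by blast
  ultimately show ?thesis using assms(2) by simp
qed

lemma crystal_le_cover:
  assumes "crystal_le nu N T T'" "tableau_rank T' = Suc (tableau_rank T)"
  shows "\<exists>i\<in>{1..N}. crystal_F i T = Some T'"
  using assms(1) unfolding crystal_le_def
proof (cases rule: converse_rtranclE)
  case base
  with assms(2) show ?thesis by simp
next
  case (step U)
  then obtain i where i: "i \<in> {1..N}" "crystal_F i T = Some U"
    unfolding crystal_step_def by blast
  have "U = T'"
    using crystal_le_rank_antisym[of nu N U T'] step(2) assms(2) tableau_rank_crystal_F[OF i(2)]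
    unfolding crystal_le_def by simp
  with i show ?thesis by blast
qed

lemma not_crystal_le_cover:
  assumes rw: "reading_word T = u @ w @ v" "reading_word T' = u @ w' @ v"
    and rank: "tableau_rank T' = Suc (tableau_rank T)"
    and q: "q < length w" "length w' = length w" "w ! q \<noteq> w' ! q"
    and not_F: "crystal_F (w ! q) T \<noteq> Some T'"
  shows "\<not> crystal_le nu N T T'"
proof
  assume "crystal_le nu N T T'"
  then obtain i where F: "crystal_F i T = Some T'"
    using crystal_le_cover rank by blast
  then obtain p where p: "reading_word T ! p = i" "reading_word T' = (reading_word T)[p := Suc i]"
    using crystal_F_SomeD by blast
  have "reading_word T ! (length u + q) \<noteq> reading_word T' ! (length u + q)"
    using rw q by (simp add: nth_append)
  then have "p = length u + q"
    using p(2) by (metis nth_list_update_neq)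
  then have "i = w ! q"
    using p(1) rw q(1) by (simp add: nth_append)
  with F not_F show False by simp
qed

lemma not_is_lattice_on_ranked:
  fixes rank :: "'a \<Rightarrow> nat"
  assumes rank_mono: "\<And>a b. le a b \<Longrightarrow> rank a \<le> rank b"
    and rank_antisym: "\<And>a b. le a b \<Longrightarrow> rank b \<le> rank a \<Longrightarrow> a = b"
    and S: "x \<in> S" "y \<in> S" "z \<in> S" "z' \<in> S"
    and upper: "le x z" "le y z" "le x z'" "le y z'"
    and cover: "rank z = Suc (rank y)"
    and incomparable: "\<not> le x y" "\<not> le z z'"
  shows "\<not> is_lattice_on S le"
proof
  assume "is_lattice_on S le"
  then obtain j where j: "le x j" "le y j"
    and least: "\<forall>u\<in>S. le x u \<and> le y u \<longrightarrow> le j u"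
    using S(1,2) unfolding is_lattice_on_def by blast
  have "le j z" "le j z'"
    using least S(3,4) upper by blast+
  consider "rank j \<le> rank y" | "rank z \<le> rank j"
    using rank_mono[OF \<open>le j z\<close>] cover by linarith
  then show False
  proof cases
    case 1
    then have "y = j" using rank_antisym j(2) by blast
    with j(1) incomparable(1) show False by simp
  next
    case 2
    then have "j = z" using rank_antisym \<open>le j z\<close> by blast
    with \<open>le j z'\<close> incomparable(2) show False by simp
  qed
qed

definition shape_row :: "nat \<Rightarrow> nat \<Rightarrow> nat" where
  "shape_row m r = (if r < m then 3 else if r = m then 2 else 1)"

lemma shape_eq_map_shape_row:
  "m < l \<Longrightarrow> replicate m 3 @ [2] @ replicate (l - m - 1) 1 = map (shape_row m) [0..<l]"
  by (rule nth_equalityI) (auto simp: nth_append shape_row_def)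

lemma map_rows_in_crystal_B:
  assumes "\<And>r. r < l \<Longrightarrow> length (R r) = nu r"
    and "\<And>r c. r < l \<Longrightarrow> c < nu r \<Longrightarrow> 1 \<le> R r ! c \<and> R r ! c \<le> N + 1"
    and "\<And>r c. r < l \<Longrightarrow> Suc c < nu r \<Longrightarrow> R r ! c \<le> R r ! Suc c"
    and "\<And>r c. Suc r < l \<Longrightarrow> c < nu (Suc r) \<Longrightarrow> R r ! c < R (Suc r) ! c"
  shows "map R [0..<l] \<in> crystal_B (map nu [0..<l]) N"
  using assms by (auto simp: crystal_B_def ssyt_def)

lemma upt_split: "i \<le> j \<Longrightarrow> j \<le> k \<Longrightarrow> [i..<k] = [i..<j] @ [j..<k]"
  by (metis le_add_diff_inverse upt_add_eq_append)

section \<open>The case \<open>m = 1\<close>\<close>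

definition rowA :: "nat \<Rightarrow> nat \<Rightarrow> nat \<Rightarrow> nat \<Rightarrow> nat list" where
  "rowA u v w r = (if r = 0 then [1, u, v] else if r = 1 then [w, 5] else [r + 2])"

definition tabA :: "nat \<Rightarrow> nat \<Rightarrow> nat \<Rightarrow> nat \<Rightarrow> nat list list" where
  "tabA l u v w = map (rowA u v w) [0..<l]"

lemma tabA_in_crystal_B:
  assumes "4 \<le> l" "l \<le> n" "1 \<le> u" "u \<le> v" "u < 5" "1 < w" "w < 4" "v \<le> n + 1"
  shows "tabA l u v w \<in> crystal_B (map (shape_row 1) [0..<l]) n"
  unfolding tabA_def
proof (rule map_rows_in_crystal_B)
  fix r c
  show "r < l \<Longrightarrow> length (rowA u v w r) = shape_row 1 r"
    by (simp add: rowA_def shape_row_def)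
  show "r < l \<Longrightarrow> c < shape_row 1 r \<Longrightarrow> 1 \<le> rowA u v w r ! c \<and> rowA u v w r ! c \<le> n + 1"
    using assms by (auto simp: rowA_def shape_row_def nth_Cons')
  show "r < l \<Longrightarrow> Suc c < shape_row 1 r \<Longrightarrow> rowA u v w r ! c \<le> rowA u v w r ! Suc c"
    using assms by (auto simp: rowA_def shape_row_def nth_Cons')
  show "Suc r < l \<Longrightarrow> c < shape_row 1 (Suc r) \<Longrightarrow> rowA u v w r ! c < rowA u v w (Suc r) ! c"
    using assms by (auto simp: rowA_def shape_row_def nth_Cons' split: if_splits)
qed

lemma reading_word_tabA:
  assumes "3 \<le> l"
  shows "reading_word (tabA l u v w) = rev (map (\<lambda>r. r + 2) [3..<l]) @ [4, w, 5, 1, u, v] @ []"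
proof -
  have rows: "[0..<l] = [0, 1, 2] @ [3..<l]"
    using upt_split[of 0 3 l] assms by (simp add: upt_rec)
  have lower: "map (rowA u v w) [3..<l] = map (\<lambda>r. [r + 2]) [3..<l]"
    by (simp add: rowA_def)
  show ?thesis
    unfolding tabA_def rows map_append lower by (simp add: reading_word_def rowA_def rev_map)
qed

lemma crystal_F_tabA_iff:
  assumes "3 \<le> l" "i \<le> 3"
  shows "crystal_F i (tabA l u v w) = Some (tabA l u' v' w') \<longleftrightarrow>
    word_F i [4, w, 5, 1, u, v] = Some [4, w', 5, 1, u', v']"
  using assms
  by (subst crystal_F_eq_Some_iff_middle[OF reading_word_tabA reading_word_tabA])
    (auto simp: tabA_def rowA_def)

lemma tabA_le_step:
  assumes "4 \<le> l" "l \<le> n" "1 \<le> u" "u \<le> v" "u < 5" "1 < w" "w < 4" "v \<le> n + 1"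
    and "i \<in> {1..3}" "word_F i [4, w, 5, 1, u, v] = Some [4, w', 5, 1, u', v']"
  shows "crystal_le (map (shape_row 1) [0..<l]) n (tabA l u v w) (tabA l u' v' w')"
proof (rule crystal_le_step[OF tabA_in_crystal_B])
  show "crystal_F i (tabA l u v w) = Some (tabA l u' v' w')"
    using assms by (simp add: crystal_F_tabA_iff)
qed (use assms in auto)

lemma tabA_upper_bounds:
  assumes "4 \<le> l" "l \<le> n"
  shows "crystal_le (map (shape_row 1) [0..<l]) n (tabA l 1 3 2) (tabA l 1 4 3)"
    and "crystal_le (map (shape_row 1) [0..<l]) n (tabA l 1 4 2) (tabA l 1 4 3)"
    and "crystal_le (map (shape_row 1) [0..<l]) n (tabA l 1 3 2) (tabA l 3 4 2)"
    and "crystal_le (map (shape_row 1) [0..<l]) n (tabA l 1 4 2) (tabA l 3 4 2)"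
proof -
  let ?le = "crystal_le (map (shape_row 1) [0..<l]) n"
  have "?le (tabA l 1 3 2) (tabA l 1 3 3)"
    by (rule tabA_le_step[where i = 2]) (use assms in \<open>simp_all add: word_F_def\<close>)
  also have "?le (tabA l 1 3 3) (tabA l 1 4 3)"
    by (rule tabA_le_step[where i = 3]) (use assms in \<open>simp_all add: word_F_def\<close>)
  finally show "?le (tabA l 1 3 2) (tabA l 1 4 3)" .
  show "?le (tabA l 1 4 2) (tabA l 1 4 3)"
    by (rule tabA_le_step[where i = 2]) (use assms in \<open>simp_all add: word_F_def\<close>)
  have "?le (tabA l 1 3 2) (tabA l 2 3 2)"
    by (rule tabA_le_step[where i = 1]) (use assms in \<open>simp_all add: word_F_def\<close>)
  also have "?le (tabA l 2 3 2) (tabA l 3 3 2)"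
    by (rule tabA_le_step[where i = 2]) (use assms in \<open>simp_all add: word_F_def\<close>)
  also have "?le (tabA l 3 3 2) (tabA l 3 4 2)"
    by (rule tabA_le_step[where i = 3]) (use assms in \<open>simp_all add: word_F_def\<close>)
  finally show "?le (tabA l 1 3 2) (tabA l 3 4 2)" .
  have "?le (tabA l 1 4 2) (tabA l 2 4 2)"
    by (rule tabA_le_step[where i = 1]) (use assms in \<open>simp_all add: word_F_def\<close>)
  also have "?le (tabA l 2 4 2) (tabA l 3 4 2)"
    by (rule tabA_le_step[where i = 2]) (use assms in \<open>simp_all add: word_F_def\<close>)
  finally show "?le (tabA l 1 4 2) (tabA l 3 4 2)" .
qed

lemma not_lattice_shape_one:
  assumes "4 \<le> l" "l \<le> n"
  shows "\<not> is_lattice_on (crystal_B (map (shape_row 1) [0..<l]) n)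
           (crystal_le (map (shape_row 1) [0..<l]) n)"
proof -
  let ?le = "crystal_le (map (shape_row 1) [0..<l]) n"
  have rw: "reading_word (tabA l u v w) = rev (map (\<lambda>r. r + 2) [3..<l]) @ [4, w, 5, 1, u, v] @ []"
    for u v w using assms reading_word_tabA by simp
  define base where "base = tableau_rank (tabA l 0 0 0)"
  have rank: "tableau_rank (tabA l u v w) = u + v + w + base" for u v w
    by (simp add: base_def tableau_rank_def rw)
  have mem: "tabA l u v w \<in> crystal_B (map (shape_row 1) [0..<l]) n"
    if "1 \<le> u" "u \<le> v" "v \<le> 4" "1 < w" "w < 4" for u v w
    by (rule tabA_in_crystal_B) (use assms that in auto)
  have cover: "tableau_rank (tabA l 1 4 3) = Suc (tableau_rank (tabA l 1 4 2))"
    by (simp add: rank)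
  \<comment> \<open>Only \<open>F\<^sub>3\<close> could change the last letter from 3 to 4, and it vanishes on \<open>tabA l 1 3 2\<close>.\<close>
  have xy: "\<not> ?le (tabA l 1 3 2) (tabA l 1 4 2)"
    by (rule not_crystal_le_cover[OF rw rw, where q = 5])
      (use assms in \<open>simp_all add: rank crystal_F_tabA_iff word_F_def\<close>)
  \<comment> \<open>The entries differ by a decrease from 3 to 2, which no \<open>F\<^sub>i\<close> performs.\<close>
  have zz': "\<not> ?le (tabA l 1 4 3) (tabA l 3 4 2)"
    by (rule not_crystal_le_cover[OF rw rw, where q = 1])
      (use assms in \<open>simp_all add: rank crystal_F_tabA_iff word_F_def\<close>)
  show ?thesis
    by (rule not_is_lattice_on_ranked[OF crystal_le_rank_mono crystal_le_rank_antisym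
          mem mem mem mem tabA_upper_bounds[OF assms] cover xy zz']) simp_all
qed

section \<open>The case \<open>m \<ge> 2\<close>\<close>

definition rowB :: "nat \<Rightarrow> nat \<Rightarrow> nat \<Rightarrow> nat \<Rightarrow> nat \<Rightarrow> nat list" where
  "rowB k a b c r =
     (if r < k then [r + 1, r + 1, r + 1] else if r = k then [k + 1, k + 1, a]
      else if r = k + 1 then [k + 2, b, c] else if r = k + 2 then [k + 3, k + 5] else [r + 1])"

definition tabB :: "nat \<Rightarrow> nat \<Rightarrow> nat \<Rightarrow> nat \<Rightarrow> nat \<Rightarrow> nat list list" where
  "tabB l k a b c = map (rowB k a b c) [0..<l]"

lemma tabB_in_crystal_B:
  assumes "k + 4 \<le> l" "l \<le> n" "k + 1 \<le> a" "a < c" "k + 1 < b" "b \<le> c" "b < k + 5" "c \<le> n + 1"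
  shows "tabB l k a b c \<in> crystal_B (map (shape_row (k + 2)) [0..<l]) n"
  unfolding tabB_def
proof (rule map_rows_in_crystal_B)
  fix r c'
  show "r < l \<Longrightarrow> length (rowB k a b c r) = shape_row (k + 2) r"
    by (simp add: rowB_def shape_row_def)
  show "r < l \<Longrightarrow> c' < shape_row (k + 2) r \<Longrightarrow>
      1 \<le> rowB k a b c r ! c' \<and> rowB k a b c r ! c' \<le> n + 1"
    using assms by (auto simp: rowB_def shape_row_def nth_Cons')
  show "r < l \<Longrightarrow> Suc c' < shape_row (k + 2) r \<Longrightarrow> rowB k a b c r ! c' \<le> rowB k a b c r ! Suc c'"
    using assms by (auto simp: rowB_def shape_row_def nth_Cons')
  show "Suc r < l \<Longrightarrow> c' < shape_row (k + 2) (Suc r) \<Longrightarrow> rowB k a b c r ! c' < rowB k a b c (Suc r) ! c'"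
    using assms by (auto simp: rowB_def shape_row_def nth_Cons' split: if_splits)
qed

lemma reading_word_tabB:
  assumes "k + 4 \<le> l"
  shows "reading_word (tabB l k a b c) =
    rev (map Suc [k + 4..<l]) @ [k + 4, k + 3, k + 5, k + 2, b, c, k + 1, k + 1, a] @
    concat (rev (map (\<lambda>r. [r + 1, r + 1, r + 1]) [0..<k]))"
proof -
  have rows: "[0..<l] = [0..<k] @ [k, k + 1, k + 2, k + 3] @ [k + 4..<l]"
    using upt_split[of 0 k "k + 4"] upt_split[of 0 "k + 4" l] assms
    by (simp add: upt_rec)
  have upper: "map (rowB k a b c) [0..<k] = map (\<lambda>r. [r + 1, r + 1, r + 1]) [0..<k]"
    by (simp add: rowB_def)
  have lower: "map (rowB k a b c) [k + 4..<l] = map (\<lambda>r. [Suc r]) [k + 4..<l]"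
    by (simp add: rowB_def)
  show ?thesis
    unfolding tabB_def rows map_append upper lower by (simp add: reading_word_def rowB_def rev_map)
qed

lemma crystal_F_tabB_iff:
  assumes "k + 4 \<le> l" "k + 1 \<le> i" "i \<le> k + 3"
  shows "crystal_F i (tabB l k a b c) = Some (tabB l k a' b' c') \<longleftrightarrow>
    word_F i [k + 4, k + 3, k + 5, k + 2, b, c, k + 1, k + 1, a] =
      Some [k + 4, k + 3, k + 5, k + 2, b', c', k + 1, k + 1, a']"
  using assms
  by (subst crystal_F_eq_Some_iff_middle[OF reading_word_tabB reading_word_tabB])
    (auto simp: tabB_def rowB_def)

lemma tabB_le_step:
  assumes "k + 4 \<le> l" "l \<le> n" "k + 1 \<le> a" "a < c" "k + 1 < b" "b \<le> c" "b < k + 5" "c \<le> n + 1"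
    and "i \<in> {k + 1..k + 3}"
    and "word_F i [k + 4, k + 3, k + 5, k + 2, b, c, k + 1, k + 1, a] =
      Some [k + 4, k + 3, k + 5, k + 2, b', c', k + 1, k + 1, a']"
  shows "crystal_le (map (shape_row (k + 2)) [0..<l]) n (tabB l k a b c) (tabB l k a' b' c')"
proof (rule crystal_le_step[OF tabB_in_crystal_B])
  show "crystal_F i (tabB l k a b c) = Some (tabB l k a' b' c')"
    using assms by (simp add: crystal_F_tabB_iff)
qed (use assms in auto)

lemma tabB_upper_bounds:
  assumes "k + 4 \<le> l" "l \<le> n"
  shows "crystal_le (map (shape_row (k + 2)) [0..<l]) n
      (tabB l k (k + 2) (k + 2) (k + 3)) (tabB l k (k + 2) (k + 2) (k + 4))"
    and "crystal_le (map (shape_row (k + 2)) [0..<l]) n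
      (tabB l k (k + 1) (k + 2) (k + 4)) (tabB l k (k + 2) (k + 2) (k + 4))"
    and "crystal_le (map (shape_row (k + 2)) [0..<l]) n
      (tabB l k (k + 2) (k + 2) (k + 3)) (tabB l k (k + 2) (k + 3) (k + 4))"
    and "crystal_le (map (shape_row (k + 2)) [0..<l]) n
      (tabB l k (k + 1) (k + 2) (k + 4)) (tabB l k (k + 2) (k + 3) (k + 4))"
proof -
  let ?le = "crystal_le (map (shape_row (k + 2)) [0..<l]) n"
  show "?le (tabB l k (k + 2) (k + 2) (k + 3)) (tabB l k (k + 2) (k + 2) (k + 4))"
    by (rule tabB_le_step[where i = "k + 3"]) (use assms in \<open>simp_all add: word_F_def\<close>)
  show "?le (tabB l k (k + 1) (k + 2) (k + 4)) (tabB l k (k + 2) (k + 2) (k + 4))"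
    by (rule tabB_le_step[where i = "k + 1"]) (use assms in \<open>simp_all add: word_F_def\<close>)
  have "?le (tabB l k (k + 2) (k + 2) (k + 3)) (tabB l k (k + 2) (k + 3) (k + 3))"
    by (rule tabB_le_step[where i = "k + 2"]) (use assms in \<open>simp_all add: word_F_def\<close>)
  also have "?le (tabB l k (k + 2) (k + 3) (k + 3)) (tabB l k (k + 2) (k + 3) (k + 4))"
    by (rule tabB_le_step[where i = "k + 3"]) (use assms in \<open>simp_all add: word_F_def\<close>)
  finally show "?le (tabB l k (k + 2) (k + 2) (k + 3)) (tabB l k (k + 2) (k + 3) (k + 4))" .
  have "?le (tabB l k (k + 1) (k + 2) (k + 4)) (tabB l k (k + 1) (k + 3) (k + 4))"
    by (rule tabB_le_step[where i = "k + 2"]) (use assms in \<open>simp_all add: word_F_def\<close>)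
  also have "?le (tabB l k (k + 1) (k + 3) (k + 4)) (tabB l k (k + 2) (k + 3) (k + 4))"
    by (rule tabB_le_step[where i = "k + 1"]) (use assms in \<open>simp_all add: word_F_def\<close>)
  finally show "?le (tabB l k (k + 1) (k + 2) (k + 4)) (tabB l k (k + 2) (k + 3) (k + 4))" .
qed

lemma not_lattice_shape_ge_two:
  assumes "k + 4 \<le> l" "l \<le> n"
  shows "\<not> is_lattice_on (crystal_B (map (shape_row (k + 2)) [0..<l]) n)
           (crystal_le (map (shape_row (k + 2)) [0..<l]) n)"
proof -
  let ?le = "crystal_le (map (shape_row (k + 2)) [0..<l]) n"
  have rw: "reading_word (tabB l k a b c) =
    rev (map Suc [k + 4..<l]) @ [k + 4, k + 3, k + 5, k + 2, b, c, k + 1, k + 1, a] @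
    concat (rev (map (\<lambda>r. [r + 1, r + 1, r + 1]) [0..<k]))" for a b c
    using assms(1) by (rule reading_word_tabB)
  define base where "base = tableau_rank (tabB l k 0 0 0)"
  have rank: "tableau_rank (tabB l k a b c) = a + b + c + base" for a b c
    by (simp add: base_def tableau_rank_def rw)
  have mem: "tabB l k a b c \<in> crystal_B (map (shape_row (k + 2)) [0..<l]) n"
    if "k + 1 \<le> a" "a < c" "k + 1 < b" "b \<le> c" "c \<le> k + 4" for a b c
    by (rule tabB_in_crystal_B) (use assms that in auto)
  have cover: "tableau_rank (tabB l k (k + 2) (k + 2) (k + 4)) =
      Suc (tableau_rank (tabB l k (k + 1) (k + 2) (k + 4)))"
    by (simp add: rank)
  have "tabB l k (k + 2) (k + 2) (k + 3) \<noteq> tabB l k (k + 1) (k + 2) (k + 4)"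
    using rw[of "k + 2" "k + 2" "k + 3"] rw[of "k + 1" "k + 2" "k + 4"] by auto
  then have xy: "\<not> ?le (tabB l k (k + 2) (k + 2) (k + 3)) (tabB l k (k + 1) (k + 2) (k + 4))"
    using crystal_le_rank_antisym rank by fastforce
  \<comment> \<open>\<open>F\<^bsub>k+2\<^esub>\<close> raises the unmatched letter \<open>k + 2\<close> in row \<open>k\<close>, not the one in row \<open>k + 1\<close>.\<close>
  have zz': "\<not> ?le (tabB l k (k + 2) (k + 2) (k + 4)) (tabB l k (k + 2) (k + 3) (k + 4))"
    by (rule not_crystal_le_cover[OF rw rw, where q = 4])
      (use assms in \<open>simp_all add: rank crystal_F_tabB_iff word_F_def\<close>)
  show ?thesis
    by (rule not_is_lattice_on_ranked[OF crystal_le_rank_mono crystal_le_rank_antisym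
          mem mem mem mem tabB_upper_bounds[OF assms] cover xy zz']) simp_all
qed

theorem lemma5p7:
  fixes lam :: "nat list" and l m n :: nat
  assumes "l \<ge> 4" and "n \<ge> l" and "1 \<le> m" and "m \<le> l - 2"
    and "lam = replicate m 3 @ [2] @ replicate (l - m - 1) 1"
  shows "\<not> is_lattice_on (crystal_B lam n) (crystal_le lam n)"
proof -
  have lam: "lam = map (shape_row m) [0..<l]"
    using assms(1,4) shape_eq_map_shape_row[of m l] by (simp add: assms(5))
  show ?thesis
  proof (cases "m = 1")
    case True
    show ?thesis
      unfolding lam True by (rule not_lattice_shape_one[OF assms(1,2)])
  next
    case False
    define k where "k = m - 2"
    have k: "m = k + 2"
      using False assms(3) by (simp add: k_def)
    show ?thesis
      unfolding lam k by (rule not_lattice_shape_ge_two) (use assms k in auto)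
  qed
qed

end
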